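(* Let $\Omega\subset\mathbb{R}^2$ be open and $\gamma:\Omega\to\mathbb{R}^2$ a smooth map satisfying $\gamma_{,tt}=\gamma_{,ss}$, $\langle\gamma_{,t},\gamma_{,s}\rangle = 0$ and $|\gamma_{,t}|^2+|\gamma_{,s}|^2=1$, and let $\mathcal{S}$ be the ``timelike maximal'' surface $\{(t,\gamma(t,s))\}\subset\mathbb{R}^{1+2}$. Suppose $(t_0,s_0)\in\Omega$ satisfies $\gamma_{,s}(t_0,s_0)=0$ (so $\gamma(t_0,s_0)$ is a singular point of $\mathcal{S}$) and $\gamma_{,ss}(t_0,s_0)\neq0$. Then locally around $(t_0,s_0)$, the singularities of $\mathcal{S}$ (the points where $\gamma_{,s}=0$) are cusps of the time slices $s\mapsto\gamma(t,s)$ and propagate along the null curve $t\mapsto(t,\gamma(t,S(t)))$, where $S$ solves \[ S'(t) = -\frac{\langle\gamma_{,ss}(t,S(t)),\gamma_{,ts}(t,S(t))\rangle}{|\gamma_{,ss}(t,S(t))|^2},\qquad S(t_0)=s_0. \]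
   Context: $\mathbb{R}^{1+2}$ is Minkowski space with metric $-dt^2+|dx|^2$; subscripts after commas denote partial derivatives; $\langle\cdot,\cdot\rangle$ is the Euclidean inner product on $\mathbb{R}^2$. *)

theory Defs
  imports "HOL-Analysis.Analysis"
begin

definition pd_t :: "(real \<times> real \<Rightarrow> 'a::real_normed_vector) \<Rightarrow> real \<times> real \<Rightarrow> 'a" where
  "pd_t f p = vector_derivative (\<lambda>\<tau>. f (\<tau>, snd p)) (at (fst p))"

definition pd_s :: "(real \<times> real \<Rightarrow> 'a::real_normed_vector) \<Rightarrow> real \<times> real \<Rightarrow> 'a" where
  "pd_s f p = vector_derivative (\<lambda>\<sigma>. f (fst p, \<sigma>)) (at (snd p))"

inductive_set iterated_partials :: "(real \<times> real \<Rightarrow> 'a::real_normed_vector) \<Rightarrow> (real \<times> real \<Rightarrow> 'a) set"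
  for f where
    base: "f \<in> iterated_partials f"
  | dt: "g \<in> iterated_partials f \<Longrightarrow> pd_t g \<in> iterated_partials f"
  | ds: "g \<in> iterated_partials f \<Longrightarrow> pd_s g \<in> iterated_partials f"

definition smooth_on :: "(real \<times> real) set \<Rightarrow> (real \<times> real \<Rightarrow> 'a::real_normed_vector) \<Rightarrow> bool" where
  "smooth_on \<Omega> f \<longleftrightarrow>
     (\<forall>g \<in> iterated_partials f. continuous_on \<Omega> g \<and>
        (\<forall>p \<in> \<Omega>. (\<lambda>\<tau>. g (\<tau>, snd p)) differentiable (at (fst p)) \<and>
                   (\<lambda>\<sigma>. g (fst p, \<sigma>)) differentiable (at (snd p))))"

definition mink_q :: "real \<times> (real^2) \<Rightarrow> real" where
  "mink_q v = - (fst v)\<^sup>2 + (norm (snd v))\<^sup>2"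

definition null_curve_on :: "real set \<Rightarrow> (real \<Rightarrow> real \<times> (real^2)) \<Rightarrow> bool" where
  "null_curve_on I c \<longleftrightarrow>
     (\<forall>t \<in> I. c differentiable (at t) \<and> vector_derivative c (at t) \<noteq> 0 \<and>
               mink_q (vector_derivative c (at t)) = 0)"

text \<open>A planar curve c has a cusp at s0: c is differentiable near s0, its velocity vanishes
  at s0 and nowhere else nearby, and the unit tangent has opposite (nonzero) one-sided
  limits at s0, i.e. the curve arrives and departs along the same line, reversing direction.\<close>

definition cusp_at :: "(real \<Rightarrow> real^2) \<Rightarrow> real \<Rightarrow> bool" where
  "cusp_at c s0 \<longleftrightarrow>
     (\<exists>e>0. (\<forall>s \<in> ball s0 e. c differentiable (at s)) \<and>
            vector_derivative c (at s0) = 0 \<and>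
            (\<forall>s \<in> ball s0 e - {s0}. vector_derivative c (at s) \<noteq> 0) \<and>
            (\<exists>u. u \<noteq> 0 \<and>
               ((\<lambda>s. vector_derivative c (at s) /\<^sub>R norm (vector_derivative c (at s)))
                   \<longlongrightarrow> u) (at_right s0) \<and>
               ((\<lambda>s. vector_derivative c (at s) /\<^sub>R norm (vector_derivative c (at s)))
                   \<longlongrightarrow> - u) (at_left s0)))"

end

theory Submission
  imports Defs
begin

text \<open>At a singular point the normalization gives \<open>|\<gamma>\<^sub>,\<^sub>t| = 1\<close>, so \<open>\<gamma>\<^sub>,\<^sub>t \<noteq> 0\<close> nearby and,
  because \<open>\<gamma>\<^sub>,\<^sub>s \<perp> \<gamma>\<^sub>,\<^sub>t\<close>, the singular set is locally the zero set of the scalar function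
  \<open>F = det(\<gamma>\<^sub>,\<^sub>s, \<gamma>\<^sub>,\<^sub>t)\<close>. Differentiating the orthogonality in \<open>s\<close> shows \<open>\<gamma>\<^sub>,\<^sub>s\<^sub>s \<perp> \<gamma>\<^sub>,\<^sub>t\<close>
  wherever \<open>\<gamma>\<^sub>,\<^sub>s = 0\<close>, hence \<open>F\<^sub>,\<^sub>s = det(\<gamma>\<^sub>,\<^sub>s\<^sub>s, \<gamma>\<^sub>,\<^sub>t) = \<plusminus>|\<gamma>\<^sub>,\<^sub>s\<^sub>s| \<noteq> 0\<close>, and the implicit
  function theorem produces the curve \<open>s = S(t)\<close> with \<open>S' = -F\<^sub>,\<^sub>t / F\<^sub>,\<^sub>s\<close>; the Binet-Cauchy
  identity turns this quotient into the stated formula. On a time slice the velocity \<open>\<gamma>\<^sub>,\<^sub>s\<close>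
  vanishes at \<open>S(t)\<close> with nonzero derivative \<open>\<gamma>\<^sub>,\<^sub>s\<^sub>s\<close>, so the unit tangent reverses: a cusp.
  Finally \<open>d/dt \<gamma>(t, S t) = \<gamma>\<^sub>,\<^sub>t + S' \<gamma>\<^sub>,\<^sub>s = \<gamma>\<^sub>,\<^sub>t\<close> is a unit vector, so the curve
  \<open>t \<mapsto> (t, \<gamma>(t, S t))\<close> is null.\<close>

section \<open>Calculus in the plane\<close>

lemma MVT_closed_segment:
  fixes f f' :: "real \<Rightarrow> real"
  assumes "\<And>x. x \<in> closed_segment a b \<Longrightarrow> (f has_real_derivative f' x) (at x)"
  shows "\<exists>z\<in>closed_segment a b. f b - f a = (b - a) * f' z"
proof (cases a b rule: linorder_cases)
  case less
  then obtain z where "a < z" "z < b" "f b - f a = (b - a) * f' z"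
    using MVT2[of a b f f'] assms by (fastforce simp: closed_segment_eq_real_ivl)
  then show ?thesis using less by (intro bexI[of _ z]) (auto simp: closed_segment_eq_real_ivl)
next
  case greater
  then obtain z where "b < z" "z < a" "f a - f b = (a - b) * f' z"
    using MVT2[of b a f f'] assms by (fastforce simp: closed_segment_eq_real_ivl)
  then show ?thesis using greater
    by (intro bexI[of _ z]) (auto simp: closed_segment_eq_real_ivl algebra_simps)
qed auto

lemma dist_Pair_le_add: "dist (a, b) (c, d) \<le> dist a c + dist b d"
  using sqrt_sum_squares_le_sum_abs[of "dist a c" "dist b d"] by (simp add: dist_Pair_Pair)

lemma eventually_nhds_square:
  fixes t s :: real
  assumes "eventually P (nhds (t, s))"
  shows "\<exists>e>0. \<forall>x\<in>cball t e. \<forall>y\<in>cball s e. P (x, y)"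
proof -
  obtain d where "d > 0" and d: "\<And>q. dist q (t, s) < d \<Longrightarrow> P q"
    using assms unfolding eventually_nhds_metric by blast
  have "P (x, y)" if "x \<in> cball t (d / 3)" "y \<in> cball s (d / 3)" for x y
  proof (rule d)
    show "dist (x, y) (t, s) < d"
      using dist_Pair_le_add[of x y t s] that \<open>d > 0\<close> by (simp add: dist_commute)
  qed
  then show ?thesis using \<open>d > 0\<close> by (intro exI[of _ "d / 3"]) auto
qed

lemma second_difference_MVT:
  fixes f ft fts :: "real \<times> real \<Rightarrow> real"
  assumes "h > 0"
    and dft: "\<And>x y. x \<in> {t..t+h} \<Longrightarrow> y \<in> {s..s+h} \<Longrightarrow>
                ((\<lambda>x. f (x, y)) has_real_derivative ft (x, y)) (at x)"
    and dfts: "\<And>x y. x \<in> {t..t+h} \<Longrightarrow> y \<in> {s..s+h} \<Longrightarrow>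
                ((\<lambda>y. ft (x, y)) has_real_derivative fts (x, y)) (at y)"
  shows "\<exists>\<xi>\<in>{t..t+h}. \<exists>\<eta>\<in>{s..s+h}.
           f (t+h, s+h) - f (t+h, s) - f (t, s+h) + f (t, s) = h * h * fts (\<xi>, \<eta>)"
proof -
  obtain \<xi> where \<xi>: "t < \<xi>" "\<xi> < t + h"
    and "(f (t+h, s+h) - f (t+h, s)) - (f (t, s+h) - f (t, s)) = h * (ft (\<xi>, s+h) - ft (\<xi>, s))"
    using MVT2[of t "t + h" "\<lambda>x. f (x, s+h) - f (x, s)" "\<lambda>x. ft (x, s+h) - ft (x, s)"] \<open>h > 0\<close>
    by (fastforce intro!: derivative_intros dft)
  moreover obtain \<eta> where "s < \<eta>" "\<eta> < s + h" and "ft (\<xi>, s+h) - ft (\<xi>, s) = h * fts (\<xi>, \<eta>)"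
    using MVT2[of s "s + h" "\<lambda>y. ft (\<xi>, y)" "\<lambda>y. fts (\<xi>, y)"] \<open>h > 0\<close> \<xi> dfts by fastforce
  ultimately show ?thesis by (intro bexI[of _ \<xi>] bexI[of _ \<eta>]) auto
qed

text \<open>Clairaut's theorem, proved by computing the second difference of \<open>f\<close> over a small
  square in both orders with the mean value theorem.\<close>

lemma mixed_partials_eq:
  fixes f ft fs fts fst :: "real \<times> real \<Rightarrow> real"
  assumes "open U" "p \<in> U"
    and dft: "\<And>x y. (x, y) \<in> U \<Longrightarrow> ((\<lambda>x. f (x, y)) has_real_derivative ft (x, y)) (at x)"
    and dfs: "\<And>x y. (x, y) \<in> U \<Longrightarrow> ((\<lambda>y. f (x, y)) has_real_derivative fs (x, y)) (at y)"
    and dfts: "\<And>x y. (x, y) \<in> U \<Longrightarrow> ((\<lambda>y. ft (x, y)) has_real_derivative fts (x, y)) (at y)"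
    and dfst: "\<And>x y. (x, y) \<in> U \<Longrightarrow> ((\<lambda>x. fs (x, y)) has_real_derivative fst (x, y)) (at x)"
    and "continuous_on U fts" "continuous_on U fst"
  shows "fts p = fst p"
proof (rule ccontr)
  assume ne: "fts p \<noteq> fst p"
  obtain t s where p: "p = (t, s)" by fastforce
  define r where "r = \<bar>fts p - fst p\<bar> / 2"
  have "r > 0" using ne by (simp add: r_def)
  have "isCont fts p" "isCont fst p"
    using assms by (auto simp: continuous_on_eq_continuous_at)
  then have "\<forall>\<^sub>F q in nhds p. q \<in> U \<and> dist (fts q) (fts p) < r \<and> dist (fst q) (fst p) < r"
    using \<open>r > 0\<close> assms(1,2)
    by (intro eventually_conj eventually_nhds_in_open)
       (auto simp: isCont_def tendsto_at_iff_tendsto_nhds dest: tendstoD)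
  then obtain h where "h > 0" and h: "\<And>x y. x \<in> cball t h \<Longrightarrow> y \<in> cball s h \<Longrightarrow>
      (x, y) \<in> U \<and> dist (fts (x, y)) (fts p) < r \<and> dist (fst (x, y)) (fst p) < r"
    using eventually_nhds_square[of _ t s] unfolding p by blast
  have box: "\<And>x y. x \<in> {t..t+h} \<Longrightarrow> y \<in> {s..s+h} \<Longrightarrow> (x, y) \<in> U"
   and box': "\<And>x y. x \<in> {s..s+h} \<Longrightarrow> y \<in> {t..t+h} \<Longrightarrow> (y, x) \<in> U"
    using h by (auto simp: dist_real_def)
  obtain \<xi> \<eta> where \<xi>\<eta>: "\<xi> \<in> {t..t+h}" "\<eta> \<in> {s..s+h}"
    and D1: "f (t+h, s+h) - f (t+h, s) - f (t, s+h) + f (t, s) = h * h * fts (\<xi>, \<eta>)"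
    using second_difference_MVT[OF \<open>h > 0\<close>, of t s f ft fts] box dft dfts by blast
  obtain \<eta>' \<xi>' where \<xi>\<eta>': "\<eta>' \<in> {s..s+h}" "\<xi>' \<in> {t..t+h}"
    and D2: "f (t+h, s+h) - f (t, s+h) - f (t+h, s) + f (t, s) = h * h * fst (\<xi>', \<eta>')"
    using second_difference_MVT[OF \<open>h > 0\<close>, of s t "\<lambda>(y, x). f (x, y)" "\<lambda>(y, x). fs (x, y)"
        "\<lambda>(y, x). fst (x, y)"] box' dfs dfst
    by auto
  have "h * h * fts (\<xi>, \<eta>) = h * h * fst (\<xi>', \<eta>')" using D1 D2 by argo
  then have "fts (\<xi>, \<eta>) = fst (\<xi>', \<eta>')" using \<open>h > 0\<close> by simp
  moreover have "dist (fts (\<xi>, \<eta>)) (fts p) < r" "dist (fst (\<xi>', \<eta>')) (fst p) < r"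
    using h \<xi>\<eta> \<xi>\<eta>' \<open>h > 0\<close> by (auto simp: dist_real_def)
  ultimately show False by (simp add: r_def dist_real_def abs_if split: if_splits)
qed

lemma mixed_partials_eq_vector:
  fixes g gt gs gts gst :: "real \<times> real \<Rightarrow> 'a::real_inner"
  assumes "open U" "p \<in> U"
    and "\<And>x y. (x, y) \<in> U \<Longrightarrow> ((\<lambda>x. g (x, y)) has_vector_derivative gt (x, y)) (at x)"
    and "\<And>x y. (x, y) \<in> U \<Longrightarrow> ((\<lambda>y. g (x, y)) has_vector_derivative gs (x, y)) (at y)"
    and "\<And>x y. (x, y) \<in> U \<Longrightarrow> ((\<lambda>y. gt (x, y)) has_vector_derivative gts (x, y)) (at y)"
    and "\<And>x y. (x, y) \<in> U \<Longrightarrow> ((\<lambda>x. gs (x, y)) has_vector_derivative gst (x, y)) (at x)"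
    and "continuous_on U gts" "continuous_on U gst"
  shows "gts p = gst p"
proof -
  define w where "w = gts p - gst p"
  have inner_w: "((\<lambda>x. a x \<bullet> w) has_real_derivative a' \<bullet> w) (at x)"
    if "(a has_vector_derivative a') (at x)" for a a' x
    using bounded_linear.has_vector_derivative[OF bounded_linear_inner_left that, of w]
    by (simp add: has_real_derivative_iff_has_vector_derivative)
  have "gts p \<bullet> w = gst p \<bullet> w"
    by (rule mixed_partials_eq[OF assms(1,2), where f = "\<lambda>q. g q \<bullet> w"
          and ft = "\<lambda>q. gt q \<bullet> w" and fs = "\<lambda>q. gs q \<bullet> w"])
       (use assms inner_w in \<open>auto intro: continuous_intros\<close>)
  then have "w \<bullet> w = 0" by (simp add: w_def inner_diff_left)
  then show ?thesis by (simp add: w_def)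
qed

lemma has_derivative_of_partials:
  fixes g gt gs :: "real \<times> real \<Rightarrow> 'a::real_normed_vector"
  assumes "open U" "(x, y) \<in> U"
    and dgt: "\<And>x y. (x, y) \<in> U \<Longrightarrow> ((\<lambda>\<tau>. g (\<tau>, y)) has_vector_derivative gt (x, y)) (at x)"
    and dgs: "\<And>x y. (x, y) \<in> U \<Longrightarrow> ((\<lambda>\<sigma>. g (x, \<sigma>)) has_vector_derivative gs (x, y)) (at y)"
    and "continuous_on U gs"
  shows "(g has_derivative (\<lambda>(h, k). h *\<^sub>R gt (x, y) + k *\<^sub>R gs (x, y))) (at (x, y))"
proof -
  obtain e where "e > 0" and e: "\<And>a b. a \<in> cball x e \<Longrightarrow> b \<in> cball y e \<Longrightarrow> (a, b) \<in> U"
    using eventually_nhds_square[OF eventually_nhds_in_open[OF assms(1,2)]] by blast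
  define X Y where "X = ball x e" and "Y = ball y e"
  have XY: "X \<times> Y \<subseteq> U" "x \<in> X" "y \<in> Y" using e \<open>e > 0\<close> by (auto simp: X_def Y_def)
  have "((\<lambda>(a, b). g (a, b)) has_derivative
      (\<lambda>(h, k). h *\<^sub>R gt (x, y) + blinfun_scaleR_left (gs (x, y)) k)) (at (x, y) within X \<times> Y)"
  proof (rule has_derivative_partialsI[where f = "\<lambda>a b. g (a, b)"])
    show "((\<lambda>a. g (a, y)) has_derivative (\<lambda>h. h *\<^sub>R gt (x, y))) (at x within X)"
      using dgt[OF assms(2)] unfolding has_vector_derivative_def by (rule has_derivative_at_withinI)
    show "((\<lambda>b. g (a, b)) has_derivative blinfun_scaleR_left (gs (a, b))) (at b within Y)"
      if "a \<in> X" "b \<in> Y" for a b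
      using dgs[of a b] XY(1) that unfolding has_vector_derivative_def blinfun_scaleR_left.rep_eq
      by (auto intro: has_derivative_at_withinI)
    have "continuous (at (x, y) within X \<times> Y) gs"
      using assms(2,5) XY(1) continuous_within_subset
      by (metis continuous_on_eq_continuous_within)
    then show "continuous (at (x, y) within X \<times> Y) (\<lambda>(a, b). blinfun_scaleR_left (gs (a, b)))"
      by (simp add: case_prod_beta' bounded_linear.continuous[OF bounded_linear_blinfun_scaleR_left])
  qed (use XY in \<open>auto simp: Y_def\<close>)
  moreover have "at (x, y) within X \<times> Y = at (x, y)"
    using XY by (intro at_within_open) (auto simp: X_def Y_def open_Times)
  ultimately show ?thesis by (simp add: blinfun_scaleR_left.rep_eq case_prod_beta')
qed

lemma bounded_bilinear_has_real_derivative: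
  fixes b :: "'a::real_normed_vector \<Rightarrow> 'b::real_normed_vector \<Rightarrow> real"
  assumes "bounded_bilinear b"
    and "(f has_vector_derivative f') (at x)" "(g has_vector_derivative g') (at x)"
  shows "((\<lambda>x. b (f x) (g x)) has_real_derivative b f' (g x) + b (f x) g') (at x)"
  using bounded_bilinear.has_vector_derivative[OF assms]
  by (simp add: has_real_derivative_iff_has_vector_derivative add.commute)

lemma has_vector_derivative_imp_tendsto_quotient:
  fixes f :: "real \<Rightarrow> 'a::real_normed_vector"
  assumes "(f has_vector_derivative v) (at x)"
  shows "((\<lambda>y. (f y - f x) /\<^sub>R (y - x)) \<longlongrightarrow> v) (at x)"
proof -
  have "((\<lambda>y. norm (f y - f x - (y - x) *\<^sub>R v) / norm (y - x)) \<longlongrightarrow> 0) (at x)"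
    using assms unfolding has_vector_derivative_def has_derivative_iff_norm by auto
  moreover have "norm (f y - f x - (y - x) *\<^sub>R v) / norm (y - x) = norm ((f y - f x) /\<^sub>R (y - x) - v)"
    if "y \<noteq> x" for y
  proof -
    have "(f y - f x) /\<^sub>R (y - x) - v = (1 / (y - x)) *\<^sub>R (f y - f x - (y - x) *\<^sub>R v)"
      using that by (simp add: scaleR_diff_right divide_inverse_commute)
    then show ?thesis using that by (simp add: divide_inverse_commute)
  qed
  ultimately have "((\<lambda>y. norm ((f y - f x) /\<^sub>R (y - x) - v)) \<longlongrightarrow> 0) (at x)"
    by (rule Lim_transform_within[OF _ zero_less_one]) auto
  then show ?thesis
    by (simp add: tendsto_norm_zero_iff LIM_zero_iff)
qed

lemma smooth_on_continuous_on:
  "smooth_on \<Omega> f \<Longrightarrow> g \<in> iterated_partials f \<Longrightarrow> continuous_on \<Omega> g"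
  unfolding smooth_on_def by blast

lemma smooth_on_has_vector_derivative_t:
  assumes "smooth_on \<Omega> f" "g \<in> iterated_partials f" "(x, y) \<in> \<Omega>"
  shows "((\<lambda>\<tau>. g (\<tau>, y)) has_vector_derivative pd_t g (x, y)) (at x)"
  using assms unfolding smooth_on_def pd_t_def by (fastforce intro: vector_derivative_works[THEN iffD1])

lemma smooth_on_has_vector_derivative_s:
  assumes "smooth_on \<Omega> f" "g \<in> iterated_partials f" "(x, y) \<in> \<Omega>"
  shows "((\<lambda>\<sigma>. g (x, \<sigma>)) has_vector_derivative pd_s g (x, y)) (at y)"
  using assms unfolding smooth_on_def pd_s_def by (fastforce intro: vector_derivative_works[THEN iffD1])

lemma smooth_on_pd_s_pd_t:
  fixes f :: "real \<times> real \<Rightarrow> 'a::real_inner"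
  assumes "smooth_on \<Omega> f" "open \<Omega>" "p \<in> \<Omega>"
  shows "pd_s (pd_t f) p = pd_t (pd_s f) p"
  by (rule mixed_partials_eq_vector[OF assms(2,3), where g = f and gt = "pd_t f" and gs = "pd_s f"])
     (auto intro!: smooth_on_has_vector_derivative_t[OF assms(1)]
        smooth_on_has_vector_derivative_s[OF assms(1)] smooth_on_continuous_on[OF assms(1)]
        iterated_partials.intros)

section \<open>An implicit function theorem in the plane\<close>

lemma unique_zero_between:
  fixes g g' :: "real \<Rightarrow> real"
  assumes "a < b" "g a < 0" "g b > 0"
    and dg: "\<And>y. a \<le> y \<Longrightarrow> y \<le> b \<Longrightarrow> (g has_real_derivative g' y) (at y) \<and> g' y > 0"
  shows "\<exists>!y. a < y \<and> y < b \<and> g y = 0"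
proof -
  have mono: "g y < g y'" if "a \<le> y" "y < y'" "y' \<le> b" for y y'
  proof (rule DERIV_pos_imp_increasing[OF \<open>y < y'\<close>])
    fix x assume "y \<le> x" "x \<le> y'"
    then show "\<exists>d. (g has_real_derivative d) (at x) \<and> d > 0" using dg[of x] that by auto
  qed
  have "continuous_on {a..b} g"
    using dg by (intro continuous_at_imp_continuous_on) (meson DERIV_isCont atLeastAtMost_iff)
  then obtain y where "a \<le> y" "y \<le> b" "g y = 0"
    using IVT'[of g a 0 b] assms(1-3) by auto
  moreover have "y \<noteq> a" "y \<noteq> b" using calculation assms(2,3) by auto
  ultimately show ?thesis
  proof (intro ex1I[of _ y])
    fix y' assume y': "a < y' \<and> y' < b \<and> g y' = 0"
    show "y' = y"
    proof (rule ccontr)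
      assume "y' \<noteq> y"
      then consider "y' < y" | "y < y'" by linarith
      then show False using mono[of y' y] mono[of y y'] y' \<open>g y = 0\<close> \<open>a \<le> y\<close> \<open>y \<le> b\<close>
        by cases auto
    qed
  qed auto
qed

lemma square_increment_bounds:
  fixes F Ft Fs :: "real \<times> real \<Rightarrow> real"
  assumes square: "\<And>x y. x \<in> cball t0 e \<Longrightarrow> y \<in> cball s0 e \<Longrightarrow>
        ((\<lambda>x. F (x, y)) has_real_derivative Ft (x, y)) (at x) \<and>
        ((\<lambda>y. F (x, y)) has_real_derivative Fs (x, y)) (at y) \<and> m \<le> Fs (x, y) \<and> \<bar>Ft (x, y)\<bar> \<le> M"
  shows "\<And>x y1 y2. x \<in> cball t0 e \<Longrightarrow> y1 \<in> cball s0 e \<Longrightarrow> y2 \<in> cball s0 e \<Longrightarrow> y1 \<le> y2 \<Longrightarrow>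
           m * (y2 - y1) \<le> F (x, y2) - F (x, y1)"
    and "\<And>x1 x2 y. x1 \<in> cball t0 e \<Longrightarrow> x2 \<in> cball t0 e \<Longrightarrow> y \<in> cball s0 e \<Longrightarrow>
           \<bar>F (x2, y) - F (x1, y)\<bar> \<le> M * \<bar>x2 - x1\<bar>"
proof -
  have segment: "closed_segment a b \<subseteq> cball c e" if "a \<in> cball c e" "b \<in> cball c e" for a b c :: real
    using that by (simp add: closed_segment_subset)
  show "m * (y2 - y1) \<le> F (x, y2) - F (x, y1)"
    if xy: "x \<in> cball t0 e" "y1 \<in> cball s0 e" "y2 \<in> cball s0 e" and "y1 \<le> y2" for x y1 y2
  proof -
    obtain z where z: "z \<in> cball s0 e" and "F (x, y2) - F (x, y1) = (y2 - y1) * Fs (x, z)"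
      using MVT_closed_segment[of y1 y2 "\<lambda>y. F (x, y)" "\<lambda>y. Fs (x, y)"] segment[OF xy(2,3)]
        square[OF xy(1)] by blast
    moreover have "m \<le> Fs (x, z)" using square[OF xy(1) z] by blast
    ultimately show ?thesis using \<open>y1 \<le> y2\<close> by (simp add: mult.commute[of m] mult_left_mono)
  qed
  show "\<bar>F (x2, y) - F (x1, y)\<bar> \<le> M * \<bar>x2 - x1\<bar>"
    if xy: "x1 \<in> cball t0 e" "x2 \<in> cball t0 e" "y \<in> cball s0 e" for x1 x2 y
  proof -
    obtain z where z: "z \<in> cball t0 e" and "F (x2, y) - F (x1, y) = (x2 - x1) * Ft (z, y)"
      using MVT_closed_segment[of x1 x2 "\<lambda>x. F (x, y)" "\<lambda>x. Ft (x, y)"] segment[OF xy(1,2)]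
        square xy(3) by blast
    moreover have "\<bar>Ft (z, y)\<bar> \<le> M" using square[OF z xy(3)] by blast
    ultimately show ?thesis by (simp add: abs_mult mult.commute[of M] mult_left_mono)
  qed
qed

text \<open>\<open>F\<close> increases at rate \<open>m\<close> in \<open>s\<close> and is \<open>M\<close>-Lipschitz in \<open>t\<close>, so for \<open>M * \<bar>t - t0\<bar> < m * e\<close>
  the slice \<open>F (t, \<cdot>)\<close> keeps the signs it has at \<open>s0 \<plusminus> e\<close> for \<open>t = t0\<close>.\<close>

lemma unique_zero_on_slices:
  fixes F Ft Fs :: "real \<times> real \<Rightarrow> real"
  assumes "e > 0" "m > 0" "F (t0, s0) = 0"
    and square: "\<And>x y. x \<in> cball t0 e \<Longrightarrow> y \<in> cball s0 e \<Longrightarrow>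
        ((\<lambda>x. F (x, y)) has_real_derivative Ft (x, y)) (at x) \<and>
        ((\<lambda>y. F (x, y)) has_real_derivative Fs (x, y)) (at y) \<and> m \<le> Fs (x, y) \<and> \<bar>Ft (x, y)\<bar> \<le> M"
  shows "\<exists>\<delta>>0. \<delta> \<le> e \<and> (\<forall>t \<in> {t0 - \<delta> <..< t0 + \<delta>}. \<exists>!s. s0 - e < s \<and> s < s0 + e \<and> F (t, s) = 0)"
proof -
  have incr: "m * (y2 - y1) \<le> F (x, y2) - F (x, y1)"
    if "x \<in> cball t0 e" "y1 \<in> cball s0 e" "y2 \<in> cball s0 e" "y1 \<le> y2" for x y1 y2
    using square that by (rule square_increment_bounds(1))
  have lip: "\<bar>F (x2, y) - F (x1, y)\<bar> \<le> M * \<bar>x2 - x1\<bar>"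
    if "x1 \<in> cball t0 e" "x2 \<in> cball t0 e" "y \<in> cball s0 e" for x1 x2 y
    using square that by (rule square_increment_bounds(2))
  have "M \<ge> 0" using square[of t0 s0] \<open>e > 0\<close> by auto
  define \<delta> where "\<delta> = min e (m * e / (M + 1))"
  have "\<delta> > 0" "\<delta> \<le> e" using \<open>e > 0\<close> \<open>m > 0\<close> \<open>M \<ge> 0\<close> by (auto simp: \<delta>_def)
  have "M * \<delta> \<le> M * (m * e / (M + 1))" using \<open>M \<ge> 0\<close> unfolding \<delta>_def by (intro mult_left_mono) auto
  also have "\<dots> < m * e" using \<open>e > 0\<close> \<open>m > 0\<close> \<open>M \<ge> 0\<close> by (simp add: field_simps)
  finally have "M * \<delta> < m * e" .
  have centres: "s0 - e \<in> cball s0 e" "s0 + e \<in> cball s0 e" "s0 \<in> cball s0 e" "t0 \<in> cball t0 e"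
    using \<open>e > 0\<close> by (auto simp: dist_real_def)
  have "m * e \<le> F (t0, s0 + e)" "m * e \<le> - F (t0, s0 - e)"
    using incr[of t0 s0 "s0 + e"] incr[of t0 "s0 - e" s0] centres \<open>e > 0\<close> assms(3) by auto
  moreover have "\<exists>!s. s0 - e < s \<and> s < s0 + e \<and> F (t, s) = 0" if "t \<in> {t0 - \<delta> <..< t0 + \<delta>}" for t
  proof -
    have t: "t \<in> cball t0 e" using that \<open>\<delta> \<le> e\<close> by (auto simp: dist_real_def)
    have "M * \<bar>t - t0\<bar> \<le> M * \<delta>" using that \<open>M \<ge> 0\<close> by (intro mult_left_mono) auto
    then have near: "\<bar>F (t, y) - F (t0, y)\<bar> < m * e" if "y \<in> cball s0 e" for y
      using lip[OF centres(4) t that] \<open>M * \<delta> < m * e\<close> by auto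
    show ?thesis
    proof (rule unique_zero_between[where g' = "\<lambda>y. Fs (t, y)"])
      fix y assume "s0 - e \<le> y" "y \<le> s0 + e"
      then have "y \<in> cball s0 e" by (simp add: dist_real_def)
      then show "((\<lambda>y. F (t, y)) has_real_derivative Fs (t, y)) (at y) \<and> Fs (t, y) > 0"
        using square[OF t] \<open>m > 0\<close> by force
    qed (use calculation near[OF centres(1)] near[OF centres(2)] \<open>e > 0\<close> in auto)
  qed
  ultimately show ?thesis using \<open>\<delta> > 0\<close> \<open>\<delta> \<le> e\<close> by blast
qed

lemma implicit_function_square:
  fixes F Ft Fs :: "real \<times> real \<Rightarrow> real"
  assumes "e > 0" "m > 0" "F (t0, s0) = 0"
    and square: "\<And>x y. x \<in> cball t0 e \<Longrightarrow> y \<in> cball s0 e \<Longrightarrow>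
        ((\<lambda>x. F (x, y)) has_real_derivative Ft (x, y)) (at x) \<and>
        ((\<lambda>y. F (x, y)) has_real_derivative Fs (x, y)) (at y) \<and> m \<le> Fs (x, y) \<and> \<bar>Ft (x, y)\<bar> \<le> M"
  shows "\<exists>\<delta>>0. \<delta> \<le> e \<and> (\<exists>S. S t0 = s0 \<and>
           (\<forall>t \<in> {t0 - \<delta> <..< t0 + \<delta>}. S t \<in> {s0 - e <..< s0 + e}) \<and>
           (\<forall>t \<in> {t0 - \<delta> <..< t0 + \<delta>}. \<forall>s \<in> {s0 - e <..< s0 + e}. F (t, s) = 0 \<longleftrightarrow> s = S t) \<and>
           continuous_on {t0 - \<delta> <..< t0 + \<delta>} S)"
proof -
  obtain \<delta> where "\<delta> > 0" "\<delta> \<le> e"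
    and unique: "\<And>t. t \<in> {t0 - \<delta> <..< t0 + \<delta>} \<Longrightarrow> \<exists>!s. s0 - e < s \<and> s < s0 + e \<and> F (t, s) = 0"
    using unique_zero_on_slices[OF assms] by blast
  define I where "I = {t0 - \<delta> <..< t0 + \<delta>}"
  define S where "S t = (THE s. s0 - e < s \<and> s < s0 + e \<and> F (t, s) = 0)" for t
  have S: "s0 - e < S t \<and> S t < s0 + e \<and> F (t, S t) = 0" if "t \<in> I" for t
    unfolding S_def by (rule theI'[OF unique[OF that[unfolded I_def]]])
  have zero_iff: "F (t, s) = 0 \<longleftrightarrow> s = S t" if "t \<in> I" "s \<in> {s0 - e <..< s0 + e}" for t s
    using unique[OF that(1)[unfolded I_def]] S[OF that(1)] that(2) by auto
  have "S t0 = s0" using zero_iff[of t0 s0] \<open>\<delta> > 0\<close> \<open>e > 0\<close> assms(3) by (simp add: I_def)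
  have I_cball: "t \<in> cball t0 e" and S_cball: "S t \<in> cball s0 e" if "t \<in> I" for t
    using that S[OF that] \<open>\<delta> \<le> e\<close> by (auto simp: I_def dist_real_def)
  have "m * \<bar>S t' - S t\<bar> \<le> M * \<bar>t' - t\<bar>" if "t \<in> I" "t' \<in> I" for t t'
  proof -
    have incr: "m * (y2 - y1) \<le> F (t', y2) - F (t', y1)"
      if "y1 \<in> cball s0 e" "y2 \<in> cball s0 e" "y1 \<le> y2" for y1 y2
      using square I_cball[OF \<open>t' \<in> I\<close>] that by (rule square_increment_bounds(1))
    have "m * \<bar>S t' - S t\<bar> \<le> \<bar>F (t', S t') - F (t', S t)\<bar>"
      using incr[of "S t" "S t'"] incr[of "S t'" "S t"] S_cball that
      by (cases "S t \<le> S t'") (auto simp: abs_if)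
    also have "\<dots> = \<bar>F (t', S t) - F (t, S t)\<bar>" using S that by simp
    also have "\<dots> \<le> M * \<bar>t' - t\<bar>"
      using square I_cball[OF that(1)] I_cball[OF that(2)] S_cball[OF that(1)]
      by (rule square_increment_bounds(2))
    finally show ?thesis .
  qed
  moreover have "M \<ge> 0" using square[of t0 s0] \<open>e > 0\<close> by auto
  ultimately have "continuous_on I S"
    by (intro lipschitz_on_continuous_on[where L = "M / m"] lipschitz_onI)
       (use \<open>m > 0\<close> in \<open>auto simp: dist_real_def field_simps\<close>)
  then show ?thesis
    using \<open>\<delta> > 0\<close> \<open>\<delta> \<le> e\<close> \<open>S t0 = s0\<close> S zero_iff unfolding I_def
    by (intro exI[of _ \<delta>] conjI exI[of _ S]) auto
qed

lemma two_point_quotient_near: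
  fixes Ft Fs :: "'a::metric_space \<Rightarrow> real"
  assumes "open U" "P \<in> U" "isCont Ft P" "isCont Fs P" "Fs P \<noteq> 0" "r > 0"
  obtains d where "d > 0" "\<And>a b. dist a P < d \<Longrightarrow> dist b P < d \<Longrightarrow>
      a \<in> U \<and> b \<in> U \<and> Fs b \<noteq> 0 \<and> dist (- Ft a / Fs b) (- Ft P / Fs P) < r"
proof -
  define Q where "Q z = - Ft (fst z) / Fs (snd z)" for z
  have Fs_snd: "isCont (\<lambda>z. Fs (snd z)) (P, P)"
    using isCont_o2[where f = snd and a = "(P, P)" and g = Fs] assms(4) by simp
  moreover have "isCont (\<lambda>z. Ft (fst z)) (P, P)"
    using isCont_o2[where f = fst and a = "(P, P)" and g = Ft] assms(3) by simp
  ultimately have "isCont Q (P, P)"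
    unfolding Q_def using assms(5) by (intro continuous_intros) auto
  then have "\<forall>\<^sub>F z in nhds (P, P). dist (Q z) (Q (P, P)) < r"
    using \<open>r > 0\<close> by (intro tendstoD) (simp add: isCont_def tendsto_at_iff_tendsto_nhds)
  moreover have "\<forall>\<^sub>F z in nhds (P, P). Fs (snd z) \<noteq> 0"
    using tendsto_imp_eventually_ne[OF Fs_snd[THEN isContD, THEN tendsto_at_iff_tendsto_nhds[THEN iffD1]]]
      assms(5) by simp
  moreover have "\<forall>\<^sub>F z in nhds (P, P). z \<in> fst -` U \<inter> snd -` U"
    using assms(1,2) by (intro eventually_nhds_in_open open_Int open_vimage_fst open_vimage_snd) auto
  ultimately have "\<forall>\<^sub>F z in nhds (P, P).
      z \<in> fst -` U \<inter> snd -` U \<and> Fs (snd z) \<noteq> 0 \<and> dist (Q z) (Q (P, P)) < r"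
    by eventually_elim auto
  then obtain d where "d > 0" and d: "\<And>z. dist z (P, P) < d \<Longrightarrow>
      z \<in> fst -` U \<inter> snd -` U \<and> Fs (snd z) \<noteq> 0 \<and> dist (Q z) (Q (P, P)) < r"
    unfolding eventually_nhds_metric by blast
  show thesis
  proof (rule that[of "d / 2"])
    fix a b assume "dist a P < d / 2" "dist b P < d / 2"
    then have "dist (a, b) (P, P) < d" using dist_Pair_le_add[of a b P P] by simp
    from d[OF this] show "a \<in> U \<and> b \<in> U \<and> Fs b \<noteq> 0 \<and> dist (- Ft a / Fs b) (- Ft P / Fs P) < r"
      by (simp add: Q_def)
  qed (use \<open>d > 0\<close> in simp)
qed

lemma implicit_difference_quotient:
  fixes F Ft Fs :: "real \<times> real \<Rightarrow> real"
  assumes "F (\<tau>, y) = 0" "F (t, s) = 0"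
    and dFt: "\<And>x. x \<in> closed_segment t \<tau> \<Longrightarrow> ((\<lambda>x. F (x, y)) has_real_derivative Ft (x, y)) (at x)"
    and dFs: "\<And>z. z \<in> closed_segment s y \<Longrightarrow> ((\<lambda>z. F (t, z)) has_real_derivative Fs (t, z)) (at z)"
  shows "\<exists>\<xi>\<in>closed_segment t \<tau>. \<exists>\<eta>\<in>closed_segment s y. (y - s) * Fs (t, \<eta>) = - ((\<tau> - t) * Ft (\<xi>, y))"
proof -
  obtain \<xi> where \<xi>: "\<xi> \<in> closed_segment t \<tau>" "F (\<tau>, y) - F (t, y) = (\<tau> - t) * Ft (\<xi>, y)"
    using MVT_closed_segment[of t \<tau> "\<lambda>x. F (x, y)" "\<lambda>x. Ft (x, y)"] dFt by blast
  obtain \<eta> where \<eta>: "\<eta> \<in> closed_segment s y" "F (t, y) - F (t, s) = (y - s) * Fs (t, \<eta>)"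
    using MVT_closed_segment[of s y "\<lambda>z. F (t, z)" "\<lambda>z. Fs (t, z)"] dFs by blast
  have "(y - s) * Fs (t, \<eta>) = - ((\<tau> - t) * Ft (\<xi>, y))"
    using \<xi>(2) \<eta>(2) assms(1,2) by linarith
  with \<xi>(1) \<eta>(1) show ?thesis by blast
qed

text \<open>The difference quotient of \<open>S\<close> is \<open>-Ft/Fs\<close> evaluated at two points near
  \<open>(t, S t)\<close>, so the derivative comes from the continuity of \<open>Ft\<close>, \<open>Fs\<close> and \<open>S\<close> alone.\<close>

lemma implicit_function_has_derivative:
  fixes F Ft Fs :: "real \<times> real \<Rightarrow> real" and S :: "real \<Rightarrow> real"
  assumes "open U" "(t, S t) \<in> U" "isCont S t"
    and zero: "\<forall>\<^sub>F \<tau> in nhds t. F (\<tau>, S \<tau>) = 0"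
    and dFt: "\<And>x y. (x, y) \<in> U \<Longrightarrow> ((\<lambda>x. F (x, y)) has_real_derivative Ft (x, y)) (at x)"
    and dFs: "\<And>x y. (x, y) \<in> U \<Longrightarrow> ((\<lambda>y. F (x, y)) has_real_derivative Fs (x, y)) (at y)"
    and "isCont Ft (t, S t)" "isCont Fs (t, S t)" "Fs (t, S t) \<noteq> 0"
  shows "(S has_real_derivative - Ft (t, S t) / Fs (t, S t)) (at t)"
  unfolding has_field_derivative_iff tendsto_iff
proof (intro allI impI)
  fix r :: real assume "r > 0"
  obtain d where "d > 0" and d: "\<And>a b. dist a (t, S t) < d \<Longrightarrow> dist b (t, S t) < d \<Longrightarrow>
      a \<in> U \<and> b \<in> U \<and> Fs b \<noteq> 0 \<and> dist (- Ft a / Fs b) (- Ft (t, S t) / Fs (t, S t)) < r"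
    using two_point_quotient_near[OF assms(1,2,7-9) \<open>r > 0\<close>] by blast
  have "d / 2 > 0" using \<open>d > 0\<close> by simp
  have "\<forall>\<^sub>F \<tau> in at t. \<tau> \<noteq> t \<and> dist \<tau> t < d / 2 \<and> dist (S \<tau>) (S t) < d / 2 \<and> F (\<tau>, S \<tau>) = 0"
    using eventually_at_in_open[OF open_UNIV UNIV_I, of t]
      tendstoD[OF tendsto_ident_at[where a = t and s = UNIV] \<open>d / 2 > 0\<close>]
      tendstoD[OF assms(3)[unfolded isCont_def] \<open>d / 2 > 0\<close>]
      zero[unfolded eventually_nhds_conv_at, THEN conjunct1]
    by eventually_elim auto
  then show "\<forall>\<^sub>F \<tau> in at t. dist ((S \<tau> - S t) / (\<tau> - t)) (- Ft (t, S t) / Fs (t, S t)) < r"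
  proof (rule eventually_mono, elim conjE)
    fix \<tau> assume \<tau>: "\<tau> \<noteq> t" "dist \<tau> t < d / 2" "dist (S \<tau>) (S t) < d / 2" "F (\<tau>, S \<tau>) = 0"
    have seg: "dist x a \<le> dist b a" if "x \<in> closed_segment a b" for x a b :: real
      using segment_bound1[OF that] by (simp add: dist_norm)
    have near: "dist (x, y) (t, S t) < d"
      if "x \<in> closed_segment t \<tau>" "y \<in> closed_segment (S t) (S \<tau>)" for x y
      using dist_Pair_le_add[of x y t "S t"] seg[OF that(1)] seg[OF that(2)] \<tau>(2,3) by linarith
    have in_U: "(x, y) \<in> U" if "x \<in> closed_segment t \<tau>" "y \<in> closed_segment (S t) (S \<tau>)" for x y
      using d[OF near[OF that], of "(t, S t)"] \<open>d > 0\<close> by auto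
    obtain \<xi> \<eta> where \<xi>: "\<xi> \<in> closed_segment t \<tau>" and \<eta>: "\<eta> \<in> closed_segment (S t) (S \<tau>)"
      and eq: "(S \<tau> - S t) * Fs (t, \<eta>) = - ((\<tau> - t) * Ft (\<xi>, S \<tau>))"
      using implicit_difference_quotient[of F \<tau> "S \<tau>" t "S t" Ft Fs] \<tau>(4) eventually_nhds_x_imp_x[OF zero]
        dFt[OF in_U[OF _ ends_in_segment(2)]] dFs[OF in_U[OF ends_in_segment(1)]] by blast
    have "Fs (t, \<eta>) \<noteq> 0" and close: "dist (- Ft (\<xi>, S \<tau>) / Fs (t, \<eta>)) (- Ft (t, S t) / Fs (t, S t)) < r"
      using d[OF near[OF \<xi> ends_in_segment(2)] near[OF ends_in_segment(1) \<eta>]] by auto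
    moreover have "(S \<tau> - S t) / (\<tau> - t) = - Ft (\<xi>, S \<tau>) / Fs (t, \<eta>)"
      using eq \<tau>(1) \<open>Fs (t, \<eta>) \<noteq> 0\<close> by (simp add: divide_simps)
    ultimately show "dist ((S \<tau> - S t) / (\<tau> - t)) (- Ft (t, S t) / Fs (t, S t)) < r" by simp
  qed
qed

lemma continuous_bounds_on_square:
  fixes Ft Fs :: "real \<times> real \<Rightarrow> real"
  assumes "open U" "(t0, s0) \<in> U" "continuous_on U Ft" "continuous_on U Fs" "Fs (t0, s0) > 0"
  obtains e m M where "e > 0" "m > 0"
    "\<And>x y. x \<in> cball t0 e \<Longrightarrow> y \<in> cball s0 e \<Longrightarrow> (x, y) \<in> U \<and> m \<le> Fs (x, y) \<and> \<bar>Ft (x, y)\<bar> \<le> M"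
proof -
  define m where "m = Fs (t0, s0) / 2"
  define M where "M = \<bar>Ft (t0, s0)\<bar> + 1"
  have "m < Fs (t0, s0)" "\<bar>Ft (t0, s0)\<bar> < M" using assms(5) by (simp_all add: m_def M_def)
  have cont: "(Ft \<longlongrightarrow> Ft (t0, s0)) (nhds (t0, s0))" "(Fs \<longlongrightarrow> Fs (t0, s0)) (nhds (t0, s0))"
    using assms(1-4) by (simp_all add: continuous_on_eq_continuous_at isCont_def tendsto_at_iff_tendsto_nhds)
  have "\<forall>\<^sub>F q in nhds (t0, s0). q \<in> U \<and> m < Fs q \<and> \<bar>Ft q\<bar> < M"
    using eventually_nhds_in_open[OF assms(1,2)] order_tendstoD(1)[OF cont(2) \<open>m < Fs (t0, s0)\<close>]
      order_tendstoD(2)[OF tendsto_rabs[OF cont(1)] \<open>\<bar>Ft (t0, s0)\<bar> < M\<close>]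
    by eventually_elim auto
  then obtain e where "e > 0" and square: "\<And>x y. x \<in> cball t0 e \<Longrightarrow> y \<in> cball s0 e \<Longrightarrow>
      (x, y) \<in> U \<and> m < Fs (x, y) \<and> \<bar>Ft (x, y)\<bar> < M"
    using eventually_nhds_square by blast
  show thesis
  proof (rule that[of e m M])
    show "(x, y) \<in> U \<and> m \<le> Fs (x, y) \<and> \<bar>Ft (x, y)\<bar> \<le> M"
      if "x \<in> cball t0 e" "y \<in> cball s0 e" for x y
      using square[OF that] by auto
  qed (use \<open>e > 0\<close> assms(5) in \<open>simp_all add: m_def\<close>)
qed

lemma implicit_function_theorem_plane_pos:
  fixes F Ft Fs :: "real \<times> real \<Rightarrow> real"
  assumes "open U" "(t0, s0) \<in> U" "F (t0, s0) = 0"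
    and dFt: "\<And>x y. (x, y) \<in> U \<Longrightarrow> ((\<lambda>x. F (x, y)) has_real_derivative Ft (x, y)) (at x)"
    and dFs: "\<And>x y. (x, y) \<in> U \<Longrightarrow> ((\<lambda>y. F (x, y)) has_real_derivative Fs (x, y)) (at y)"
    and "continuous_on U Ft" "continuous_on U Fs" "Fs (t0, s0) > 0"
  shows "\<exists>\<delta>>0. \<exists>\<epsilon>>0. \<exists>S. {t0 - \<delta> <..< t0 + \<delta>} \<times> {s0 - \<epsilon> <..< s0 + \<epsilon>} \<subseteq> U \<and> S t0 = s0 \<and>
           (\<forall>t \<in> {t0 - \<delta> <..< t0 + \<delta>}. S t \<in> {s0 - \<epsilon> <..< s0 + \<epsilon>} \<and>
              (S has_real_derivative - Ft (t, S t) / Fs (t, S t)) (at t)) \<and>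
           (\<forall>t \<in> {t0 - \<delta> <..< t0 + \<delta>}. \<forall>s \<in> {s0 - \<epsilon> <..< s0 + \<epsilon>}. F (t, s) = 0 \<longleftrightarrow> s = S t)"
proof -
  obtain e m M where "e > 0" "m > 0" and square: "\<And>x y. x \<in> cball t0 e \<Longrightarrow> y \<in> cball s0 e \<Longrightarrow>
      (x, y) \<in> U \<and> m \<le> Fs (x, y) \<and> \<bar>Ft (x, y)\<bar> \<le> M"
    using continuous_bounds_on_square[OF assms(1,2,6-8)] by blast
  have "((\<lambda>x. F (x, y)) has_real_derivative Ft (x, y)) (at x) \<and>
      ((\<lambda>y. F (x, y)) has_real_derivative Fs (x, y)) (at y) \<and> m \<le> Fs (x, y) \<and> \<bar>Ft (x, y)\<bar> \<le> M"
    if "x \<in> cball t0 e" "y \<in> cball s0 e" for x y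
    using square[OF that] dFt dFs by auto
  from implicit_function_square[OF \<open>e > 0\<close> \<open>m > 0\<close> assms(3) this]
  obtain \<delta> S where "\<delta> > 0" "\<delta> \<le> e" "S t0 = s0"
    and SJ: "\<And>t. t \<in> {t0 - \<delta> <..< t0 + \<delta>} \<Longrightarrow> S t \<in> {s0 - e <..< s0 + e}"
    and zero_iff: "\<And>t s. t \<in> {t0 - \<delta> <..< t0 + \<delta>} \<Longrightarrow> s \<in> {s0 - e <..< s0 + e} \<Longrightarrow>
      F (t, s) = 0 \<longleftrightarrow> s = S t"
    and "continuous_on {t0 - \<delta> <..< t0 + \<delta>} S"
    by blast
  let ?I = "{t0 - \<delta> <..< t0 + \<delta>}"
  have in_square: "t \<in> cball t0 e" "s \<in> cball s0 e" if "t \<in> ?I" "s \<in> {s0 - e <..< s0 + e}" for t s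
    using that \<open>\<delta> \<le> e\<close> by (auto simp: dist_real_def)
  have deriv: "(S has_real_derivative - Ft (t, S t) / Fs (t, S t)) (at t)" if "t \<in> ?I" for t
  proof (rule implicit_function_has_derivative[OF assms(1) _ _ _ dFt dFs])
    show P: "(t, S t) \<in> U" using square in_square[OF that SJ[OF that]] by blast
    show "isCont S t"
      using \<open>continuous_on ?I S\<close> that by (simp add: continuous_on_eq_continuous_at)
    show "\<forall>\<^sub>F \<tau> in nhds t. F (\<tau>, S \<tau>) = 0"
      by (rule eventually_mono[OF eventually_nhds_in_open[OF _ that]]) (use zero_iff SJ in auto)
    show "isCont Ft (t, S t)" "isCont Fs (t, S t)"
      using assms(1,6,7) P by (simp_all add: continuous_on_eq_continuous_at)
    show "Fs (t, S t) \<noteq> 0" using square in_square[OF that SJ[OF that]] \<open>m > 0\<close> by force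
  qed
  have "?I \<times> {s0 - e <..< s0 + e} \<subseteq> U" using square in_square by blast
  then show ?thesis
    using \<open>\<delta> > 0\<close> \<open>e > 0\<close> \<open>S t0 = s0\<close> SJ zero_iff deriv
    by (intro exI[of _ \<delta>] exI[of _ e] exI[of _ S] conjI ballI) auto
qed

lemma implicit_function_theorem_plane:
  fixes F Ft Fs :: "real \<times> real \<Rightarrow> real"
  assumes "open U" "(t0, s0) \<in> U" "F (t0, s0) = 0"
    and dFt: "\<And>x y. (x, y) \<in> U \<Longrightarrow> ((\<lambda>x. F (x, y)) has_real_derivative Ft (x, y)) (at x)"
    and dFs: "\<And>x y. (x, y) \<in> U \<Longrightarrow> ((\<lambda>y. F (x, y)) has_real_derivative Fs (x, y)) (at y)"
    and "continuous_on U Ft" "continuous_on U Fs" "Fs (t0, s0) \<noteq> 0"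
  shows "\<exists>\<delta>>0. \<exists>\<epsilon>>0. \<exists>S. {t0 - \<delta> <..< t0 + \<delta>} \<times> {s0 - \<epsilon> <..< s0 + \<epsilon>} \<subseteq> U \<and> S t0 = s0 \<and>
           (\<forall>t \<in> {t0 - \<delta> <..< t0 + \<delta>}. S t \<in> {s0 - \<epsilon> <..< s0 + \<epsilon>} \<and>
              (S has_real_derivative - Ft (t, S t) / Fs (t, S t)) (at t)) \<and>
           (\<forall>t \<in> {t0 - \<delta> <..< t0 + \<delta>}. \<forall>s \<in> {s0 - \<epsilon> <..< s0 + \<epsilon>}. F (t, s) = 0 \<longleftrightarrow> s = S t)"
proof (cases "Fs (t0, s0) > 0")
  case True
  then show ?thesis
    using implicit_function_theorem_plane_pos[where F = F and Ft = Ft and Fs = Fs, OF assms(1-7)] by blast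
next
  case False
  then have "- Fs (t0, s0) > 0" using assms(8) by simp
  have "\<exists>\<delta>>0. \<exists>\<epsilon>>0. \<exists>S. {t0 - \<delta> <..< t0 + \<delta>} \<times> {s0 - \<epsilon> <..< s0 + \<epsilon>} \<subseteq> U \<and> S t0 = s0 \<and>
           (\<forall>t \<in> {t0 - \<delta> <..< t0 + \<delta>}. S t \<in> {s0 - \<epsilon> <..< s0 + \<epsilon>} \<and>
              (S has_real_derivative - (- Ft (t, S t)) / (- Fs (t, S t))) (at t)) \<and>
           (\<forall>t \<in> {t0 - \<delta> <..< t0 + \<delta>}. \<forall>s \<in> {s0 - \<epsilon> <..< s0 + \<epsilon>}. - F (t, s) = 0 \<longleftrightarrow> s = S t)"
    using assms(3,6,7) dFt dFs \<open>- Fs (t0, s0) > 0\<close>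
    by (intro implicit_function_theorem_plane_pos[OF assms(1,2)]) (auto intro: DERIV_minus continuous_on_minus)
  then show ?thesis by simp
qed

section \<open>Cusps\<close>

text \<open>The unit tangent is \<open>sgn c'\<close>; near \<open>s0\<close> we have \<open>c' s = (s - s0) *\<^sub>R q s\<close> with
  \<open>q s \<longrightarrow> v\<close>, so the unit tangent tends to \<open>\<plusminus> sgn v\<close> according to the sign of \<open>s - s0\<close>.\<close>

lemma cusp_at_of_vanishing_velocity:
  fixes c c' :: "real \<Rightarrow> real^2"
  assumes "e > 0"
    and dc: "\<And>s. s \<in> ball s0 e \<Longrightarrow> (c has_vector_derivative c' s) (at s)"
    and "c' s0 = 0" and nz: "\<And>s. s \<in> ball s0 e - {s0} \<Longrightarrow> c' s \<noteq> 0"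
    and "(c' has_vector_derivative v) (at s0)" "v \<noteq> 0"
  shows "cusp_at c s0"
proof -
  have vd: "vector_derivative c (at s) = c' s" if "s \<in> ball s0 e" for s
    using dc[OF that] by (rule vector_derivative_at)
  define q where "q s = (c' s - c' s0) /\<^sub>R (s - s0)" for s
  have "((\<lambda>s. sgn (q s)) \<longlongrightarrow> sgn v) (at s0)"
    unfolding q_def using \<open>v \<noteq> 0\<close>
    by (intro tendsto_sgn has_vector_derivative_imp_tendsto_quotient assms(5))
  then have right: "((\<lambda>s. sgn (q s)) \<longlongrightarrow> sgn v) (at_right s0)"
    and left: "((\<lambda>s. - sgn (q s)) \<longlongrightarrow> - sgn v) (at_left s0)"
    by (auto intro: tendsto_minus tendsto_mono[OF at_within_le_at])
  have unit_tangent: "vector_derivative c (at s) /\<^sub>R norm (vector_derivative c (at s)) =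
      sgn (s - s0) *\<^sub>R sgn (q s)" if "s \<in> ball s0 e - {s0}" for s
  proof -
    have "c' s = (s - s0) *\<^sub>R q s" using that \<open>c' s0 = 0\<close> by (simp add: q_def)
    then have "sgn (c' s) = sgn (s - s0) *\<^sub>R sgn (q s)" by (simp add: sgn_scaleR)
    then show ?thesis using that by (simp add: vd sgn_div_norm)
  qed
  have ev_right: "\<forall>\<^sub>F s in at_right s0. s \<in> ball s0 e - {s0} \<and> sgn (s - s0) = 1"
    using \<open>e > 0\<close> unfolding eventually_at_right_field
    by (intro exI[of _ "s0 + e"]) (auto simp: dist_real_def)
  have ev_left: "\<forall>\<^sub>F s in at_left s0. s \<in> ball s0 e - {s0} \<and> sgn (s - s0) = - 1"
    using \<open>e > 0\<close> unfolding eventually_at_left_field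
    by (intro exI[of _ "s0 - e"]) (auto simp: dist_real_def)
  show ?thesis
    unfolding cusp_at_def
  proof (intro exI[of _ e] exI[of _ "sgn v"] conjI ballI)
    show "c differentiable at s" if "s \<in> ball s0 e" for s
      using dc[OF that] by (rule differentiableI_vector)
    show "vector_derivative c (at s0) = 0" using vd[of s0] \<open>e > 0\<close> \<open>c' s0 = 0\<close> by simp
    show "vector_derivative c (at s) \<noteq> 0" if "s \<in> ball s0 e - {s0}" for s
      using vd[of s] nz[OF that] that by auto
    show "((\<lambda>s. vector_derivative c (at s) /\<^sub>R norm (vector_derivative c (at s))) \<longlongrightarrow> sgn v) (at_right s0)"
      using right by (rule Lim_transform_eventually) (use ev_right unit_tangent in \<open>auto elim: eventually_mono\<close>)
    show "((\<lambda>s. vector_derivative c (at s) /\<^sub>R norm (vector_derivative c (at s))) \<longlongrightarrow> - sgn v) (at_left s0)"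
      using left by (rule Lim_transform_eventually) (use ev_left unit_tangent in \<open>auto elim: eventually_mono\<close>)
  qed (use \<open>e > 0\<close> \<open>v \<noteq> 0\<close> in \<open>auto simp: sgn_zero_iff\<close>)
qed

definition cross2 :: "real^2 \<Rightarrow> real^2 \<Rightarrow> real" where
  "cross2 a b = a$1 * b$2 - a$2 * b$1"

lemma cross2_zero_left [simp]: "cross2 0 b = 0"
  by (simp add: cross2_def)

lemma inner_real2: "(a::real^2) \<bullet> b = a$1 * b$1 + a$2 * b$2"
  by (simp add: inner_vec_def sum_2)

lemma norm_real2_sq: "(norm (a::real^2))\<^sup>2 = (a$1)\<^sup>2 + (a$2)\<^sup>2"
  by (simp only: power2_norm_eq_inner inner_real2) (simp add: power2_eq_square)

lemma bounded_bilinear_cross2: "bounded_bilinear cross2"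
proof -
  have "bilinear cross2"
    unfolding bilinear_def by (auto intro!: linearI simp: cross2_def algebra_simps)
  then show ?thesis by (simp add: bilinear_conv_bounded_bilinear)
qed

lemma cross2_mult_cross2:
  "cross2 a u * cross2 b u = (a \<bullet> b) * (norm u)\<^sup>2 - (a \<bullet> u) * (b \<bullet> u)"
  unfolding norm_real2_sq by (simp add: cross2_def inner_real2 algebra_simps power2_eq_square)

lemma cross2_eq_0_imp_eq_0:
  assumes "a \<bullet> u = 0" "cross2 a u = 0" "u \<noteq> 0"
  shows "a = 0"
  using cross2_mult_cross2[of a u a] assms by simp

section \<open>Singularities of timelike maximal surfaces\<close>

locale conformal_gauge =
  fixes \<gamma> :: "real \<times> real \<Rightarrow> real^2" and \<Omega> :: "(real \<times> real) set"
  assumes open_domain: "open \<Omega>"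
    and smooth: "smooth_on \<Omega> \<gamma>"
    and orthogonal: "\<forall>p \<in> \<Omega>. pd_t \<gamma> p \<bullet> pd_s \<gamma> p = 0"
    and normalized: "\<forall>p \<in> \<Omega>. (norm (pd_t \<gamma> p))\<^sup>2 + (norm (pd_s \<gamma> p))\<^sup>2 = 1"
begin

lemmas partials = iterated_partials.intros[of \<gamma>] iterated_partials.dt[OF iterated_partials.dt]
  iterated_partials.ds[OF iterated_partials.ds] iterated_partials.dt[OF iterated_partials.ds]
  iterated_partials.ds[OF iterated_partials.dt]

lemma has_vector_derivative_t:
  "g \<in> iterated_partials \<gamma> \<Longrightarrow> (x, y) \<in> \<Omega> \<Longrightarrow>
    ((\<lambda>\<tau>. g (\<tau>, y)) has_vector_derivative pd_t g (x, y)) (at x)"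
  by (rule smooth_on_has_vector_derivative_t[OF smooth])

lemma has_vector_derivative_s:
  "g \<in> iterated_partials \<gamma> \<Longrightarrow> (x, y) \<in> \<Omega> \<Longrightarrow>
    ((\<lambda>\<sigma>. g (x, \<sigma>)) has_vector_derivative pd_s g (x, y)) (at y)"
  by (rule smooth_on_has_vector_derivative_s[OF smooth])

lemma continuous_on_partial: "g \<in> iterated_partials \<gamma> \<Longrightarrow> continuous_on \<Omega> g"
  by (rule smooth_on_continuous_on[OF smooth])

lemma norm_pd_t_eq_1:
  assumes "p \<in> \<Omega>" "pd_s \<gamma> p = 0"
  shows "norm (pd_t \<gamma> p) = 1"
proof -
  have "(norm (pd_t \<gamma> p))\<^sup>2 = 1" using normalized assms by auto
  then show ?thesis using norm_ge_zero[of "pd_t \<gamma> p"] by (auto simp: power2_eq_1_iff)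
qed

lemma pd_t_orthogonal_pd_ss:
  assumes "(x, y) \<in> \<Omega>" "pd_s \<gamma> (x, y) = 0"
  shows "pd_t \<gamma> (x, y) \<bullet> pd_s (pd_s \<gamma>) (x, y) = 0"
proof -
  have "((\<lambda>\<sigma>. pd_t \<gamma> (x, \<sigma>) \<bullet> pd_s \<gamma> (x, \<sigma>)) has_real_derivative
      pd_s (pd_t \<gamma>) (x, y) \<bullet> pd_s \<gamma> (x, y) + pd_t \<gamma> (x, y) \<bullet> pd_s (pd_s \<gamma>) (x, y)) (at y)"
    using assms(1) by (intro bounded_bilinear_has_real_derivative[OF bounded_bilinear_inner]
        has_vector_derivative_s partials)
  moreover have "open ((\<lambda>\<sigma>. (x, \<sigma>)) -` \<Omega>)"
    by (intro continuous_open_vimage open_domain) (auto intro: continuous_intros)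
  ultimately have "((\<lambda>\<sigma>. 0) has_real_derivative
      pd_s (pd_t \<gamma>) (x, y) \<bullet> pd_s \<gamma> (x, y) + pd_t \<gamma> (x, y) \<bullet> pd_s (pd_s \<gamma>) (x, y)) (at y)"
    by (rule has_field_derivative_transform_within_open) (use assms(1) orthogonal in auto)
  from DERIV_unique[OF this DERIV_const] show ?thesis using assms(2) by simp
qed

definition det_st :: "real \<times> real \<Rightarrow> real" where
  "det_st q = cross2 (pd_s \<gamma> q) (pd_t \<gamma> q)"

definition det_st_dt :: "real \<times> real \<Rightarrow> real" where
  "det_st_dt q = cross2 (pd_t (pd_s \<gamma>) q) (pd_t \<gamma> q) + cross2 (pd_s \<gamma> q) (pd_t (pd_t \<gamma>) q)"

definition det_st_ds :: "real \<times> real \<Rightarrow> real" where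
  "det_st_ds q = cross2 (pd_s (pd_s \<gamma>) q) (pd_t \<gamma> q) + cross2 (pd_s \<gamma> q) (pd_s (pd_t \<gamma>) q)"

lemma has_real_derivative_det_st_dt:
  "(x, y) \<in> \<Omega> \<Longrightarrow> ((\<lambda>x. det_st (x, y)) has_real_derivative det_st_dt (x, y)) (at x)"
  unfolding det_st_def det_st_dt_def
  by (intro bounded_bilinear_has_real_derivative[OF bounded_bilinear_cross2] has_vector_derivative_t partials)

lemma has_real_derivative_det_st_ds:
  "(x, y) \<in> \<Omega> \<Longrightarrow> ((\<lambda>y. det_st (x, y)) has_real_derivative det_st_ds (x, y)) (at y)"
  unfolding det_st_def det_st_ds_def
  by (intro bounded_bilinear_has_real_derivative[OF bounded_bilinear_cross2] has_vector_derivative_s partials)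

lemma continuous_on_det_st_dt: "continuous_on \<Omega> det_st_dt"
  unfolding det_st_dt_def
  by (intro continuous_intros bounded_bilinear.continuous_on[OF bounded_bilinear_cross2]
      continuous_on_partial partials)

lemma continuous_on_det_st_ds: "continuous_on \<Omega> det_st_ds"
  unfolding det_st_ds_def
  by (intro continuous_intros bounded_bilinear.continuous_on[OF bounded_bilinear_cross2]
      continuous_on_partial partials)

lemma pd_s_eq_0_iff_det_st_eq_0:
  assumes "q \<in> \<Omega>" "pd_t \<gamma> q \<noteq> 0"
  shows "pd_s \<gamma> q = 0 \<longleftrightarrow> det_st q = 0"
  using cross2_eq_0_imp_eq_0[of "pd_s \<gamma> q" "pd_t \<gamma> q"] orthogonal assms
  by (auto simp: det_st_def cross2_def inner_commute)

lemma det_st_ds_squared: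
  assumes "(x, y) \<in> \<Omega>" "pd_s \<gamma> (x, y) = 0"
  shows "(det_st_ds (x, y))\<^sup>2 = (norm (pd_s (pd_s \<gamma>) (x, y)))\<^sup>2"
  using cross2_mult_cross2[of "pd_s (pd_s \<gamma>) (x, y)" "pd_t \<gamma> (x, y)" "pd_s (pd_s \<gamma>) (x, y)"]
    pd_t_orthogonal_pd_ss[OF assms] norm_pd_t_eq_1[OF assms] assms(2)
  by (simp add: det_st_ds_def power2_eq_square dot_square_norm inner_commute)

lemma det_st_slope:
  assumes "(x, y) \<in> \<Omega>" "pd_s \<gamma> (x, y) = 0" "pd_s (pd_s \<gamma>) (x, y) \<noteq> 0"
  shows "- det_st_dt (x, y) / det_st_ds (x, y) =
    - (pd_s (pd_s \<gamma>) (x, y) \<bullet> pd_s (pd_t \<gamma>) (x, y)) / (norm (pd_s (pd_s \<gamma>) (x, y)))\<^sup>2"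
proof -
  let ?p = "(x, y)"
  have "det_st_dt ?p * det_st_ds ?p = pd_s (pd_s \<gamma>) ?p \<bullet> pd_s (pd_t \<gamma>) ?p"
    using cross2_mult_cross2[of "pd_t (pd_s \<gamma>) ?p" "pd_t \<gamma> ?p" "pd_s (pd_s \<gamma>) ?p"]
      pd_t_orthogonal_pd_ss[OF assms(1,2)] norm_pd_t_eq_1[OF assms(1,2)] assms(2)
      smooth_on_pd_s_pd_t[OF smooth open_domain assms(1)]
    by (simp add: det_st_dt_def det_st_ds_def cross2_def inner_commute)
  moreover have "(det_st_ds ?p)\<^sup>2 \<noteq> 0" using det_st_ds_squared[OF assms(1,2)] assms(3) by simp
  then have "- det_st_dt ?p / det_st_ds ?p = - (det_st_dt ?p * det_st_ds ?p) / (det_st_ds ?p)\<^sup>2"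
    by (simp add: field_simps power2_eq_square)
  ultimately show ?thesis using det_st_ds_squared[OF assms(1,2)] by simp
qed

lemma singular_curve:
  assumes "(t0, s0) \<in> \<Omega>" "pd_s \<gamma> (t0, s0) = 0" "pd_s (pd_s \<gamma>) (t0, s0) \<noteq> 0"
  shows "\<exists>\<delta>>0. \<exists>\<epsilon>>0. \<exists>S. {t0 - \<delta> <..< t0 + \<delta>} \<times> {s0 - \<epsilon> <..< s0 + \<epsilon>} \<subseteq> \<Omega> \<and> S t0 = s0 \<and>
           (\<forall>t \<in> {t0 - \<delta> <..< t0 + \<delta>}. S t \<in> {s0 - \<epsilon> <..< s0 + \<epsilon>} \<and>
              (S has_real_derivative - (pd_s (pd_s \<gamma>) (t, S t) \<bullet> pd_s (pd_t \<gamma>) (t, S t))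
                 / (norm (pd_s (pd_s \<gamma>) (t, S t)))\<^sup>2) (at t) \<and>
              pd_s (pd_s \<gamma>) (t, S t) \<noteq> 0) \<and>
           (\<forall>t \<in> {t0 - \<delta> <..< t0 + \<delta>}. \<forall>s \<in> {s0 - \<epsilon> <..< s0 + \<epsilon>}. pd_s \<gamma> (t, s) = 0 \<longleftrightarrow> s = S t)"
proof -
  define U where "U = (\<Omega> \<inter> pd_t \<gamma> -` (- {0})) \<inter> (\<Omega> \<inter> pd_s (pd_s \<gamma>) -` (- {0}))"
  have "open U"
    unfolding U_def
    by (intro open_Int continuous_open_preimage open_domain continuous_on_partial partials) auto
  have "U \<subseteq> \<Omega>" by (auto simp: U_def)
  have p0: "(t0, s0) \<in> U" using assms norm_pd_t_eq_1[OF assms(1,2)] by (auto simp: U_def)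
  have det_st0: "det_st (t0, s0) = 0" using assms(2) by (simp add: det_st_def)
  have "det_st_ds (t0, s0) \<noteq> 0" using det_st_ds_squared[OF assms(1,2)] assms(3) by auto
  from implicit_function_theorem_plane[OF \<open>open U\<close> p0 det_st0
      has_real_derivative_det_st_dt[OF subsetD[OF \<open>U \<subseteq> \<Omega>\<close>]]
      has_real_derivative_det_st_ds[OF subsetD[OF \<open>U \<subseteq> \<Omega>\<close>]]
      continuous_on_subset[OF continuous_on_det_st_dt \<open>U \<subseteq> \<Omega>\<close>]
      continuous_on_subset[OF continuous_on_det_st_ds \<open>U \<subseteq> \<Omega>\<close>] this]
  obtain \<delta> \<epsilon> S where "\<delta> > 0" "\<epsilon> > 0"
    and box: "{t0 - \<delta> <..< t0 + \<delta>} \<times> {s0 - \<epsilon> <..< s0 + \<epsilon>} \<subseteq> U" and "S t0 = s0"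
    and S: "\<And>t. t \<in> {t0 - \<delta> <..< t0 + \<delta>} \<Longrightarrow> S t \<in> {s0 - \<epsilon> <..< s0 + \<epsilon>} \<and>
       (S has_real_derivative - det_st_dt (t, S t) / det_st_ds (t, S t)) (at t)"
    and zero_iff: "\<And>t s. t \<in> {t0 - \<delta> <..< t0 + \<delta>} \<Longrightarrow> s \<in> {s0 - \<epsilon> <..< s0 + \<epsilon>} \<Longrightarrow>
       det_st (t, s) = 0 \<longleftrightarrow> s = S t"
    by blast
  have singular_iff: "pd_s \<gamma> (t, s) = 0 \<longleftrightarrow> s = S t"
    if "t \<in> {t0 - \<delta> <..< t0 + \<delta>}" "s \<in> {s0 - \<epsilon> <..< s0 + \<epsilon>}" for t s
  proof -
    have "(t, s) \<in> U" using box that by blast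
    then show ?thesis
      using pd_s_eq_0_iff_det_st_eq_0[of "(t, s)"] zero_iff[OF that] by (simp add: U_def)
  qed
  have "(S has_real_derivative - (pd_s (pd_s \<gamma>) (t, S t) \<bullet> pd_s (pd_t \<gamma>) (t, S t))
      / (norm (pd_s (pd_s \<gamma>) (t, S t)))\<^sup>2) (at t) \<and> pd_s (pd_s \<gamma>) (t, S t) \<noteq> 0"
    if "t \<in> {t0 - \<delta> <..< t0 + \<delta>}" for t
  proof -
    have "(t, S t) \<in> U" using box S[OF that] that by blast
    moreover have "pd_s \<gamma> (t, S t) = 0" using singular_iff[OF that] S[OF that] by blast
    ultimately show ?thesis using S[OF that] det_st_slope[of t "S t"] by (simp add: U_def)
  qed
  then show ?thesis
    using \<open>\<delta> > 0\<close> \<open>\<epsilon> > 0\<close> box \<open>U \<subseteq> \<Omega>\<close> \<open>S t0 = s0\<close> S singular_iff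
    by (intro exI[of _ \<delta>] exI[of _ \<epsilon>] exI[of _ S] conjI ballI) auto
qed

lemma cusp_at_isolated_singularity:
  assumes "open J" "s \<in> J" "\<And>\<sigma>. \<sigma> \<in> J \<Longrightarrow> (t, \<sigma>) \<in> \<Omega>"
    and "\<And>\<sigma>. \<sigma> \<in> J \<Longrightarrow> pd_s \<gamma> (t, \<sigma>) = 0 \<longleftrightarrow> \<sigma> = s" and "pd_s (pd_s \<gamma>) (t, s) \<noteq> 0"
  shows "cusp_at (\<lambda>\<sigma>. \<gamma> (t, \<sigma>)) s"
proof -
  obtain e where "e > 0" and e: "ball s e \<subseteq> J" using assms(1,2) openE by blast
  show ?thesis
  proof (rule cusp_at_of_vanishing_velocity[where c' = "\<lambda>\<sigma>. pd_s \<gamma> (t, \<sigma>)", OF \<open>e > 0\<close>])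
    show "((\<lambda>\<sigma>. \<gamma> (t, \<sigma>)) has_vector_derivative pd_s \<gamma> (t, \<sigma>)) (at \<sigma>)" if "\<sigma> \<in> ball s e" for \<sigma>
      using assms(3) e that by (intro has_vector_derivative_s partials) auto
    show "((\<lambda>\<sigma>. pd_s \<gamma> (t, \<sigma>)) has_vector_derivative pd_s (pd_s \<gamma>) (t, s)) (at s)"
      using assms(2,3) by (intro has_vector_derivative_s partials) auto
  qed (use assms(2,4,5) e in auto)
qed

lemma has_vector_derivative_singular_curve:
  assumes "(t, S t) \<in> \<Omega>" "pd_s \<gamma> (t, S t) = 0" "(S has_real_derivative S') (at t)"
  shows "((\<lambda>t. (t, \<gamma> (t, S t))) has_vector_derivative (1, pd_t \<gamma> (t, S t))) (at t)"
proof -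
  have "(\<gamma> has_derivative (\<lambda>(h, k). h *\<^sub>R pd_t \<gamma> (t, S t) + k *\<^sub>R pd_s \<gamma> (t, S t))) (at (t, S t))"
    using assms(1)
    by (intro has_derivative_of_partials[OF open_domain] has_vector_derivative_t has_vector_derivative_s
        continuous_on_partial partials)
  moreover have "((\<lambda>\<tau>. (\<tau>, S \<tau>)) has_derivative (\<lambda>h. (h, S' * h))) (at t)"
    using assms(3) by (intro has_derivative_Pair has_derivative_ident)
      (simp add: has_field_derivative_def)
  ultimately have "((\<lambda>\<tau>. \<gamma> (\<tau>, S \<tau>)) has_derivative (\<lambda>h. h *\<^sub>R pd_t \<gamma> (t, S t))) (at t)"
    using diff_chain_at[of "\<lambda>\<tau>. (\<tau>, S \<tau>)"] assms(2) by (fastforce simp: o_def)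
  then show ?thesis
    unfolding has_vector_derivative_def
    by (intro has_derivative_Pair[OF has_derivative_ident, THEN has_derivative_eq_rhs]) auto
qed

lemma null_curve_on_singular_curve:
  assumes "\<And>t. t \<in> I \<Longrightarrow> (t, S t) \<in> \<Omega>" "\<And>t. t \<in> I \<Longrightarrow> pd_s \<gamma> (t, S t) = 0"
    and "\<And>t. t \<in> I \<Longrightarrow> (S has_real_derivative S' t) (at t)"
  shows "null_curve_on I (\<lambda>t. (t, \<gamma> (t, S t)))"
  unfolding null_curve_on_def
proof (intro ballI conjI)
  fix t assume "t \<in> I"
  note c' = has_vector_derivative_singular_curve[OF assms[OF \<open>t \<in> I\<close>]]
  show "(\<lambda>t. (t, \<gamma> (t, S t))) differentiable at t" using c' by (rule differentiableI_vector)
  show "vector_derivative (\<lambda>t. (t, \<gamma> (t, S t))) (at t) \<noteq> 0"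
    using vector_derivative_at[OF c'] by (simp add: zero_prod_def)
  show "mink_q (vector_derivative (\<lambda>t. (t, \<gamma> (t, S t))) (at t)) = 0"
    using vector_derivative_at[OF c'] norm_pd_t_eq_1[OF assms(1,2)[OF \<open>t \<in> I\<close>]]
    by (simp add: mink_q_def)
qed

end

theorem proposition3p1:
  fixes \<gamma> :: "real \<times> real \<Rightarrow> real^2"
    and \<Omega> :: "(real \<times> real) set"
    and t0 s0 :: real
  assumes "open \<Omega>"
    and "smooth_on \<Omega> \<gamma>"
    and "\<forall>p \<in> \<Omega>. pd_t (pd_t \<gamma>) p = pd_s (pd_s \<gamma>) p"
    and "\<forall>p \<in> \<Omega>. pd_t \<gamma> p \<bullet> pd_s \<gamma> p = 0"
    and "\<forall>p \<in> \<Omega>. (norm (pd_t \<gamma> p))\<^sup>2 + (norm (pd_s \<gamma> p))\<^sup>2 = 1"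
    and "(t0, s0) \<in> \<Omega>"
    and "pd_s \<gamma> (t0, s0) = 0"
    and "pd_s (pd_s \<gamma>) (t0, s0) \<noteq> 0"
  shows "\<exists>\<delta>>0. \<exists>\<epsilon>>0. \<exists>S :: real \<Rightarrow> real.
           {t0 - \<delta> <..< t0 + \<delta>} \<times> {s0 - \<epsilon> <..< s0 + \<epsilon>} \<subseteq> \<Omega> \<and>
           S t0 = s0 \<and>
           (\<forall>t \<in> {t0 - \<delta> <..< t0 + \<delta>}.
              S t \<in> {s0 - \<epsilon> <..< s0 + \<epsilon>} \<and>
              (S has_real_derivative
                 (- (pd_s (pd_s \<gamma>) (t, S t) \<bullet> pd_s (pd_t \<gamma>) (t, S t))
                    / (norm (pd_s (pd_s \<gamma>) (t, S t)))\<^sup>2)) (at t)) \<and>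
           (\<forall>t \<in> {t0 - \<delta> <..< t0 + \<delta>}. \<forall>s \<in> {s0 - \<epsilon> <..< s0 + \<epsilon>}.
              pd_s \<gamma> (t, s) = 0 \<longleftrightarrow> s = S t) \<and>
           (\<forall>t \<in> {t0 - \<delta> <..< t0 + \<delta>}. cusp_at (\<lambda>\<sigma>. \<gamma> (t, \<sigma>)) (S t)) \<and>
           null_curve_on {t0 - \<delta> <..< t0 + \<delta>} (\<lambda>t. (t, \<gamma> (t, S t)))"
proof -
  interpret conformal_gauge \<gamma> \<Omega> using assms(1,2,4,5) by unfold_locales
  obtain \<delta> \<epsilon> S where "\<delta> > 0" "\<epsilon> > 0"
    and box: "{t0 - \<delta> <..< t0 + \<delta>} \<times> {s0 - \<epsilon> <..< s0 + \<epsilon>} \<subseteq> \<Omega>" and "S t0 = s0"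
    and S: "\<And>t. t \<in> {t0 - \<delta> <..< t0 + \<delta>} \<Longrightarrow> S t \<in> {s0 - \<epsilon> <..< s0 + \<epsilon>} \<and>
       (S has_real_derivative - (pd_s (pd_s \<gamma>) (t, S t) \<bullet> pd_s (pd_t \<gamma>) (t, S t))
          / (norm (pd_s (pd_s \<gamma>) (t, S t)))\<^sup>2) (at t) \<and> pd_s (pd_s \<gamma>) (t, S t) \<noteq> 0"
    and singular_iff: "\<And>t s. t \<in> {t0 - \<delta> <..< t0 + \<delta>} \<Longrightarrow> s \<in> {s0 - \<epsilon> <..< s0 + \<epsilon>} \<Longrightarrow>
       pd_s \<gamma> (t, s) = 0 \<longleftrightarrow> s = S t"
    using singular_curve[OF assms(6-8)] by blast
  let ?I = "{t0 - \<delta> <..< t0 + \<delta>}" and ?J = "{s0 - \<epsilon> <..< s0 + \<epsilon>}"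
  have on_curve: "(t, S t) \<in> \<Omega>" "pd_s \<gamma> (t, S t) = 0" if "t \<in> ?I" for t
    using box S[OF that] singular_iff[OF that] that by auto
  have "cusp_at (\<lambda>\<sigma>. \<gamma> (t, \<sigma>)) (S t)" if "t \<in> ?I" for t
    using box singular_iff[OF that] S[OF that] that
    by (intro cusp_at_isolated_singularity[where J = ?J]) auto
  moreover have "null_curve_on ?I (\<lambda>t. (t, \<gamma> (t, S t)))"
    using on_curve S by (intro null_curve_on_singular_curve) auto
  ultimately show ?thesis
    using \<open>\<delta> > 0\<close> \<open>\<epsilon> > 0\<close> box \<open>S t0 = s0\<close> S singular_iff by blast
qed

end
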